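(* Let $\mathbf{K}$ be a field of characteristic different from $2$ and let $A$ be a (not necessarily associative) algebra over $\mathbf{K}$. For $a,b,c\in A$ put $\langle a,b,c\rangle=(ab)c-a(bc)+b(ac)$. Then $A$ is a unary Leibniz algebra if and only if $A$ satisfies the identities $$\langle a,a,a\rangle=0 \quad\text{and}\quad \langle aa,a,a\rangle=0 \qquad\text{for all } a\in A.$$
   Context: A (left) Leibniz algebra is an algebra satisfying $(ab)c=a(bc)-b(ac)$ for all $a,b,c$, i.e. $\langle a,b,c\rangle=0$. An algebra $A$ is called a unary Leibniz algebra if every subalgebra of $A$ generated by a single element is a Leibniz algebra. *)

theory Defs
  imports Main "HOL.Vector_Spaces"
begin

definition nonassoc_algebra ::
  "('k::field \<Rightarrow> 'v::ab_group_add \<Rightarrow> 'v) \<Rightarrow> ('v \<Rightarrow> 'v \<Rightarrow> 'v) \<Rightarrow> bool" where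
  "nonassoc_algebra scale mult \<longleftrightarrow>
     vector_space scale \<and>
     (\<forall>x y z. mult (x + y) z = mult x z + mult y z) \<and>
     (\<forall>x y z. mult x (y + z) = mult x y + mult x z) \<and>
     (\<forall>c x y. mult (scale c x) y = scale c (mult x y)) \<and>
     (\<forall>c x y. mult x (scale c y) = scale c (mult x y))"

definition lassoc :: "('v::ab_group_add \<Rightarrow> 'v \<Rightarrow> 'v) \<Rightarrow> 'v \<Rightarrow> 'v \<Rightarrow> 'v \<Rightarrow> 'v" where
  "lassoc mult a b c = mult (mult a b) c - mult a (mult b c) + mult b (mult a c)"

inductive_set gen_subalg ::
  "('k::field \<Rightarrow> 'v::ab_group_add \<Rightarrow> 'v) \<Rightarrow> ('v \<Rightarrow> 'v \<Rightarrow> 'v) \<Rightarrow> 'v \<Rightarrow> 'v set"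
  for scale mult a where
  gen: "a \<in> gen_subalg scale mult a"
| zero: "0 \<in> gen_subalg scale mult a"
| add: "x \<in> gen_subalg scale mult a \<Longrightarrow> y \<in> gen_subalg scale mult a \<Longrightarrow> x + y \<in> gen_subalg scale mult a"
| smul: "x \<in> gen_subalg scale mult a \<Longrightarrow> scale c x \<in> gen_subalg scale mult a"
| mul: "x \<in> gen_subalg scale mult a \<Longrightarrow> y \<in> gen_subalg scale mult a \<Longrightarrow> mult x y \<in> gen_subalg scale mult a"

definition leibniz_on :: "'v set \<Rightarrow> ('v::ab_group_add \<Rightarrow> 'v \<Rightarrow> 'v) \<Rightarrow> bool" where
  "leibniz_on S mult \<longleftrightarrow> (\<forall>x\<in>S. \<forall>y\<in>S. \<forall>z\<in>S. lassoc mult x y z = 0)"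

definition unary_leibniz ::
  "('k::field \<Rightarrow> 'v::ab_group_add \<Rightarrow> 'v) \<Rightarrow> ('v \<Rightarrow> 'v \<Rightarrow> 'v) \<Rightarrow> bool" where
  "unary_leibniz scale mult \<longleftrightarrow> (\<forall>a. leibniz_on (gen_subalg scale mult a) mult)"

end

theory Submission
  imports Defs
begin

text \<open>Since \<open>\<langle>a,a,a\<rangle> = (a a) a\<close>, and then \<open>\<langle>a a,a,a\<rangle> = - (a a)(a a)\<close>, the two identities
  say that \<open>(x x) x = 0\<close> and \<open>(x x)(x x) = 0\<close>. As 2 is invertible they can be linearized, and the linearized identities,
  applied to the right-normed powers a_0 = a, a_(k+1) = a a_k, show by induction on i + j
  that a_i a_j = 0 for i > 0. So the span of the powers is closed under multiplication and
  contains the subalgebra generated by a; the Leibniz associator is trilinear and vanishes on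
  all triples of powers, hence on that subalgebra.\<close>

locale nonassoc_alg = vector_space scale
  for scale :: "'k::field \<Rightarrow> 'v::ab_group_add \<Rightarrow> 'v" (infixr \<open>*s\<close> 75) +
  fixes mult :: "'v \<Rightarrow> 'v \<Rightarrow> 'v" (infixl \<open>\<cdot>\<close> 70)
  assumes mult_add_left: "(x + y) \<cdot> z = x \<cdot> z + y \<cdot> z"
    and mult_add_right: "x \<cdot> (y + z) = x \<cdot> y + x \<cdot> z"
    and mult_scale_left: "(c *s x) \<cdot> y = c *s (x \<cdot> y)"
    and mult_scale_right: "x \<cdot> (c *s y) = c *s (x \<cdot> y)"

lemma nonassoc_algebra_imp_nonassoc_alg:
  "nonassoc_algebra scale mult \<Longrightarrow> nonassoc_alg scale mult"
  by (simp add: nonassoc_algebra_def nonassoc_alg_def nonassoc_alg_axioms_def)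

context vector_space
begin

lemma double_eq_0_imp_eq_0:
  fixes v :: 'b
  assumes "(2::'a) \<noteq> 0" and "v + v = 0"
  shows "v = 0"
proof -
  have "v = (inverse 2 * 2) *s v"
    using assms(1) by simp
  also have "\<dots> = inverse 2 *s ((1 + 1) *s v)"
    by simp
  also have "\<dots> = inverse 2 *s (v + v)"
    by (simp only: scale_left_distrib scale_one)
  finally show ?thesis
    using assms(2) by simp
qed

lemma add_and_diff_eq_0_imp_eq_0:
  fixes u v :: 'b
  assumes "(2::'a) \<noteq> 0" and "u + v = 0" and "u - v = 0"
  shows "u = 0" and "v = 0"
proof -
  have "u + u = (u + v) + (u - v)"
    by (simp add: algebra_simps)
  also have "\<dots> = 0"
    by (simp only: assms(2,3) add_0_left)
  finally show "u = 0"
    by (rule double_eq_0_imp_eq_0[OF assms(1)])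
  then show "v = 0"
    using assms(2) by simp
qed

end

context nonassoc_alg
begin

lemma mult_zero_left [simp]: "0 \<cdot> y = 0"
  using mult_add_left[of 0 0 y] by simp

lemma mult_zero_right [simp]: "x \<cdot> 0 = 0"
  using mult_add_right[of x 0 0] by simp

lemma mult_diff_left: "(x - y) \<cdot> z = x \<cdot> z - y \<cdot> z"
  using mult_add_left[of "x - y" y z] by (simp add: eq_diff_eq)

lemma mult_diff_right: "x \<cdot> (y - z) = x \<cdot> y - x \<cdot> z"
  using mult_add_right[of x "y - z" z] by (simp add: eq_diff_eq)

lemmas mult_distribs = mult_add_left mult_add_right mult_diff_left mult_diff_right

lemma lassoc_zero [simp]:
  "lassoc (\<cdot>) 0 y z = 0" "lassoc (\<cdot>) x 0 z = 0" "lassoc (\<cdot>) x y 0 = 0"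
  by (simp_all add: lassoc_def)

lemma lassoc_linear:
  "lassoc (\<cdot>) (c *s x + x') y z = c *s lassoc (\<cdot>) x y z + lassoc (\<cdot>) x' y z"
  "lassoc (\<cdot>) x (c *s y + y') z = c *s lassoc (\<cdot>) x y z + lassoc (\<cdot>) x y' z"
  "lassoc (\<cdot>) x y (c *s z + z') = c *s lassoc (\<cdot>) x y z + lassoc (\<cdot>) x y z'"
  by (simp_all add: lassoc_def mult_add_left mult_add_right mult_scale_left mult_scale_right
      scale_right_distrib scale_right_diff_distrib)

lemma span_mult_closed:
  assumes basis: "\<And>b c. b \<in> B \<Longrightarrow> c \<in> B \<Longrightarrow> b \<cdot> c \<in> span B"
    and x: "x \<in> span B" and y: "y \<in> span B"
  shows "x \<cdot> y \<in> span B"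
proof -
  have basis_left: "b \<cdot> y \<in> span B" if "b \<in> B" for b
    using y by (induction rule: span_induct_alt)
      (simp_all add: that basis mult_distribs mult_scale_right span_zero span_add span_scale)
  from x show ?thesis
    by (induction rule: span_induct_alt)
      (simp_all add: basis_left mult_distribs mult_scale_left span_zero span_add span_scale)
qed

lemma lassoc_eq_0_on_span:
  assumes basis: "\<And>b c d. b \<in> B \<Longrightarrow> c \<in> B \<Longrightarrow> d \<in> B \<Longrightarrow> lassoc (\<cdot>) b c d = 0"
    and x: "x \<in> span B" and y: "y \<in> span B" and z: "z \<in> span B"
  shows "lassoc (\<cdot>) x y z = 0"
proof -
  have basis_12: "lassoc (\<cdot>) b c z = 0" if "b \<in> B" "c \<in> B" for b c
    using z by (induction rule: span_induct_alt) (simp_all add: that basis lassoc_linear)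
  have basis_1: "lassoc (\<cdot>) b y z = 0" if "b \<in> B" for b
    using y by (induction rule: span_induct_alt) (simp_all add: that basis_12 lassoc_linear)
  from x show ?thesis
    by (induction rule: span_induct_alt) (simp_all add: basis_1 lassoc_linear)
qed

lemma gen_subalg_subset_span:
  assumes "a \<in> B" and "\<And>b c. b \<in> B \<Longrightarrow> c \<in> B \<Longrightarrow> b \<cdot> c \<in> span B"
  shows "gen_subalg (*s) (\<cdot>) a \<subseteq> span B"
proof
  fix x
  assume "x \<in> gen_subalg (*s) (\<cdot>) a"
  then show "x \<in> span B"
    by induction (simp_all add: assms span_base span_zero span_add span_scale span_mult_closed)
qed

text \<open>\<open>rpow a k\<close> is the right-normed power \<open>a \<cdot> (a \<cdot> (\<dots> \<cdot> a))\<close> of degree \<open>k + 1\<close>.\<close>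

primrec rpow :: "'v \<Rightarrow> nat \<Rightarrow> 'v" where
  "rpow a 0 = a"
| "rpow a (Suc k) = a \<cdot> rpow a k"

declare rpow.simps(2) [simp del]

lemma rpow_1: "rpow a 1 = a \<cdot> a"
  by (simp add: rpow.simps(2))

lemmas rpow_fold = rpow.simps(2)[symmetric] rpow_1[symmetric]

end

locale unary_leibniz_identities = nonassoc_alg scale mult
  for scale :: "'k::field \<Rightarrow> 'v::ab_group_add \<Rightarrow> 'v" (infixr \<open>*s\<close> 75)
    and mult :: "'v \<Rightarrow> 'v \<Rightarrow> 'v" (infixl \<open>\<cdot>\<close> 70) +
  assumes two_neq_0: "(2::'k) \<noteq> 0"
    and cube_eq_0: "(x \<cdot> x) \<cdot> x = 0"
    and square_square_eq_0: "(x \<cdot> x) \<cdot> (x \<cdot> x) = 0"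
begin

lemma cube_linearized: "(x \<cdot> y + y \<cdot> x) \<cdot> x + (x \<cdot> x) \<cdot> y = 0"
proof -
  define P where "P x y = (x \<cdot> y + y \<cdot> x) \<cdot> x + (x \<cdot> x) \<cdot> y" for x y
  have "((x + y) \<cdot> (x + y)) \<cdot> (x + y) = (x \<cdot> x) \<cdot> x + (y \<cdot> y) \<cdot> y + P y x + P x y"
    by (simp add: P_def mult_distribs algebra_simps)
  moreover have "((x - y) \<cdot> (x - y)) \<cdot> (x - y) = (x \<cdot> x) \<cdot> x - (y \<cdot> y) \<cdot> y + P y x - P x y"
    by (simp add: P_def mult_distribs algebra_simps)
  ultimately have "P y x + P x y = 0" and "P y x - P x y = 0"
    by (simp_all add: cube_eq_0)
  then have "P x y = 0"
    by (rule add_and_diff_eq_0_imp_eq_0(2)[OF two_neq_0])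
  then show ?thesis
    by (simp add: P_def)
qed

lemma cube_linearized_full:
  "(x \<cdot> y) \<cdot> z + (y \<cdot> x) \<cdot> z + (x \<cdot> z) \<cdot> y + (z \<cdot> x) \<cdot> y + (y \<cdot> z) \<cdot> x + (z \<cdot> y) \<cdot> x = 0"
  (is "?S = 0")
proof -
  have "((x + z) \<cdot> y + y \<cdot> (x + z)) \<cdot> (x + z) + ((x + z) \<cdot> (x + z)) \<cdot> y =
      ((x \<cdot> y + y \<cdot> x) \<cdot> x + (x \<cdot> x) \<cdot> y) + ((z \<cdot> y + y \<cdot> z) \<cdot> z + (z \<cdot> z) \<cdot> y) + ?S"
    by (simp add: mult_distribs algebra_simps)
  then show ?thesis
    by (simp add: cube_linearized)
qed

lemma square_square_linearized:
  "(x \<cdot> x) \<cdot> (y \<cdot> y) + (y \<cdot> y) \<cdot> (x \<cdot> x) + (x \<cdot> y + y \<cdot> x) \<cdot> (x \<cdot> y + y \<cdot> x) = 0"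
  (is "?D22 = 0")
  and square_square_linearized_odd:
  "(x \<cdot> x) \<cdot> (x \<cdot> y + y \<cdot> x) + (x \<cdot> y + y \<cdot> x) \<cdot> (x \<cdot> x)
     + (y \<cdot> y) \<cdot> (x \<cdot> y + y \<cdot> x) + (x \<cdot> y + y \<cdot> x) \<cdot> (y \<cdot> y) = 0"
  (is "?D31 = 0")
proof -
  have "((x + y) \<cdot> (x + y)) \<cdot> ((x + y) \<cdot> (x + y)) =
      (x \<cdot> x) \<cdot> (x \<cdot> x) + (y \<cdot> y) \<cdot> (y \<cdot> y) + ?D22 + ?D31"
    by (simp add: mult_distribs algebra_simps)
  moreover have "((x - y) \<cdot> (x - y)) \<cdot> ((x - y) \<cdot> (x - y)) =
      (x \<cdot> x) \<cdot> (x \<cdot> x) + (y \<cdot> y) \<cdot> (y \<cdot> y) + ?D22 - ?D31"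
    by (simp add: mult_distribs algebra_simps)
  ultimately have "?D22 + ?D31 = 0" and "?D22 - ?D31 = 0"
    by (simp_all add: square_square_eq_0)
  then show "?D22 = 0" and "?D31 = 0"
    by (rule add_and_diff_eq_0_imp_eq_0[OF two_neq_0])+
qed

lemma square_square_linearized_full:
  "(x \<cdot> x) \<cdot> (y \<cdot> z + z \<cdot> y) + (y \<cdot> z + z \<cdot> y) \<cdot> (x \<cdot> x)
     + (x \<cdot> y + y \<cdot> x) \<cdot> (x \<cdot> z + z \<cdot> x) + (x \<cdot> z + z \<cdot> x) \<cdot> (x \<cdot> y + y \<cdot> x) = 0"
  (is "?D211 = 0")
proof -
  have "(x \<cdot> x) \<cdot> ((y + z) \<cdot> (y + z)) + ((y + z) \<cdot> (y + z)) \<cdot> (x \<cdot> x)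
      + (x \<cdot> (y + z) + (y + z) \<cdot> x) \<cdot> (x \<cdot> (y + z) + (y + z) \<cdot> x) =
    ((x \<cdot> x) \<cdot> (y \<cdot> y) + (y \<cdot> y) \<cdot> (x \<cdot> x) + (x \<cdot> y + y \<cdot> x) \<cdot> (x \<cdot> y + y \<cdot> x))
      + ((x \<cdot> x) \<cdot> (z \<cdot> z) + (z \<cdot> z) \<cdot> (x \<cdot> x) + (x \<cdot> z + z \<cdot> x) \<cdot> (x \<cdot> z + z \<cdot> x))
      + ?D211"
    by (simp add: mult_distribs algebra_simps)
  then show ?thesis
    by (simp add: square_square_linearized)
qed

text \<open>The induction step on \<open>i + j\<close>; \<open>below\<close> is the induction hypothesis.\<close>

context
  fixes a :: 'v and N :: nat
  assumes below: "\<And>i j. 0 < i \<Longrightarrow> i + j < N \<Longrightarrow> rpow a i \<cdot> rpow a j = 0"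
begin

lemma rpow_mult_gen_below: "0 < i \<Longrightarrow> i < N \<Longrightarrow> rpow a i \<cdot> a = 0"
  using below[of i 0] by simp

lemma rpow_square_below: "0 < p \<Longrightarrow> p < N \<Longrightarrow> rpow a p \<cdot> rpow a p = 0"
proof (induction p)
  case 0
  then show ?case
    by simp
next
  case (Suc p)
  show ?case
  proof (cases "p = 0")
    case True
    then show ?thesis
      using square_square_eq_0[of a] by (simp add: rpow_fold)
  next
    case False
    with Suc have "rpow a p \<cdot> a = 0" and "rpow a p \<cdot> rpow a p = 0"
      using rpow_mult_gen_below by simp_all
    then show ?thesis
      using square_square_linearized[of a "rpow a p"] by (simp add: rpow_fold)
  qed
qed

lemma rpow_shift_below:
  assumes "0 < r" and "0 < j" and "Suc (Suc r) + j = N"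
  shows "rpow a (Suc (Suc r)) \<cdot> rpow a j = rpow a (Suc r) \<cdot> rpow a (Suc j)"
proof -
  have zeros: "rpow a (Suc r) \<cdot> a = 0" "rpow a j \<cdot> a = 0" "rpow a r \<cdot> a = 0"
    "rpow a (Suc r) \<cdot> rpow a j = 0" "rpow a j \<cdot> rpow a (Suc r) = 0"
    "rpow a j \<cdot> rpow a r = 0" "rpow a r \<cdot> rpow a j = 0"
    using assms by (auto intro: below rpow_mult_gen_below)
  have "rpow a (Suc (Suc r)) \<cdot> rpow a j + rpow a (Suc j) \<cdot> rpow a (Suc r) = 0"
    using cube_linearized_full[of a "rpow a (Suc r)" "rpow a j"] zeros by (simp add: rpow_fold)
  moreover have "rpow a (Suc j) \<cdot> rpow a (Suc r) + rpow a (Suc r) \<cdot> rpow a (Suc j) = 0"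
    using square_square_linearized_full[of a "rpow a j" "rpow a r"] zeros by (simp add: rpow_fold)
  ultimately show ?thesis
    by (metis add.commute add_right_cancel)
qed

lemma rpow_shift_to_2_below:
  "0 < j \<Longrightarrow> Suc (Suc d) + j = N \<Longrightarrow> rpow a (Suc (Suc d)) \<cdot> rpow a j = rpow a 2 \<cdot> rpow a (d + j)"
proof (induction d arbitrary: j)
  case 0
  then show ?case
    by (simp add: numeral_2_eq_2)
next
  case (Suc d)
  then have "rpow a (Suc (Suc (Suc d))) \<cdot> rpow a j = rpow a (Suc (Suc d)) \<cdot> rpow a (Suc j)"
    by (intro rpow_shift_below) simp_all
  also have "\<dots> = rpow a 2 \<cdot> rpow a (Suc d + j)"
    using Suc by simp
  finally show ?case .
qed

lemma rpow_2_mult_below: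
  assumes "0 < t" and "Suc (Suc t) = N"
  shows "rpow a 2 \<cdot> rpow a t = 0"
proof -
  have zeros: "rpow a 1 \<cdot> a = 0" "rpow a t \<cdot> a = 0"
    "rpow a 1 \<cdot> rpow a t = 0" "rpow a t \<cdot> rpow a 1 = 0"
    using assms by (auto intro: below rpow_mult_gen_below)
  have "rpow a 2 \<cdot> rpow a t + rpow a (Suc t) \<cdot> rpow a 1 = 0"
    using cube_linearized_full[of a "rpow a 1" "rpow a t"] zeros by (simp add: rpow_fold numeral_2_eq_2)
  moreover have "rpow a (Suc t) \<cdot> rpow a 1 = rpow a 2 \<cdot> rpow a t"
    using rpow_shift_to_2_below[of 1 "t - 1"] assms by simp
  ultimately show ?thesis
    using two_neq_0 double_eq_0_imp_eq_0 by metis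
qed

lemma rpow_mult_below_left_ge_2:
  assumes "2 \<le> i" and "0 < j" and "i + j = N"
  shows "rpow a i \<cdot> rpow a j = 0"
proof -
  obtain d where d: "i = Suc (Suc d)"
    using assms(1) by (metis add_2_eq_Suc le_Suc_ex)
  then have "rpow a i \<cdot> rpow a j = rpow a 2 \<cdot> rpow a (d + j)"
    using assms rpow_shift_to_2_below by simp
  also have "\<dots> = 0"
    using assms d by (intro rpow_2_mult_below) simp_all
  finally show ?thesis .
qed

lemma rpow_1_mult_below:
  assumes "Suc j = N"
  shows "rpow a 1 \<cdot> rpow a j = 0"
proof (cases j)
  case 0
  then show ?thesis
    using cube_eq_0[of a] by (simp add: rpow_fold)
next
  case (Suc p)
  show ?thesis
  proof (cases p)
    case 0
    then show ?thesis
      using square_square_eq_0[of a] Suc by (simp add: rpow_fold)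
  next
    case (Suc p')
    have "rpow a p \<cdot> rpow a p = 0" and "rpow a p \<cdot> a = 0"
      using assms \<open>j = Suc p\<close> Suc by (simp_all add: rpow_square_below rpow_mult_gen_below)
    then have "rpow a 1 \<cdot> rpow a j + rpow a j \<cdot> rpow a 1 = 0"
      using square_square_linearized_odd[of a "rpow a p"] \<open>j = Suc p\<close> by (simp add: rpow_fold)
    moreover have "rpow a j \<cdot> rpow a 1 = 0"
      using assms \<open>j = Suc p\<close> Suc by (intro rpow_mult_below_left_ge_2) simp_all
    ultimately show ?thesis
      by simp
  qed
qed

lemma rpow_mult_gen_at:
  assumes "2 \<le> N"
  shows "rpow a N \<cdot> a = 0"
proof -
  obtain q where q: "N = Suc q" "0 < q"
    using assms by (cases N) auto
  have "rpow a q \<cdot> a = 0" and "rpow a 1 \<cdot> rpow a q = 0"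
    using q rpow_mult_gen_below rpow_1_mult_below by simp_all
  then show ?thesis
    using cube_linearized[of a "rpow a q"] q by (simp add: rpow_fold)
qed

lemma rpow_mult_rpow_at:
  assumes "0 < i" and "i + j = N"
  shows "rpow a i \<cdot> rpow a j = 0"
proof -
  consider "i = 1" | "2 \<le> i" "j = 0" | "2 \<le> i" "0 < j"
    using assms(1) by linarith
  then show ?thesis
  proof cases
    case 1
    then show ?thesis
      using assms rpow_1_mult_below by simp
  next
    case 2
    then show ?thesis
      using assms rpow_mult_gen_at by simp
  next
    case 3
    then show ?thesis
      using assms by (intro rpow_mult_below_left_ge_2)
  qed
qed

end

lemma rpow_mult_rpow_eq_0: "0 < i \<Longrightarrow> rpow a i \<cdot> rpow a j = 0"
proof (induction "i + j" arbitrary: i j rule: less_induct)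
  case less
  show ?case
    by (rule rpow_mult_rpow_at[where N = "i + j"]) (use less in auto)
qed

lemma rpow_mult_rpow: "rpow a i \<cdot> rpow a j = (if i = 0 then rpow a (Suc j) else 0)"
  by (simp add: rpow_mult_rpow_eq_0 rpow.simps(2))

lemma lassoc_rpow_eq_0: "lassoc (\<cdot>) (rpow a i) (rpow a j) (rpow a k) = 0"
  by (simp add: lassoc_def rpow_mult_rpow del: rpow.simps)

lemma gen_subalg_subset_span_rpow: "gen_subalg (*s) (\<cdot>) a \<subseteq> span (range (rpow a))"
proof (rule gen_subalg_subset_span)
  show "a \<in> range (rpow a)"
    using rangeI[of "rpow a" 0] by simp
  show "b \<cdot> c \<in> span (range (rpow a))" if "b \<in> range (rpow a)" and "c \<in> range (rpow a)" for b c
    using that by (auto simp: rpow_mult_rpow span_base span_zero)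
qed

lemma leibniz_on_gen_subalg: "leibniz_on (gen_subalg (*s) (\<cdot>) a) (\<cdot>)"
  unfolding leibniz_on_def
proof (intro ballI)
  fix x y z
  assume "x \<in> gen_subalg (*s) (\<cdot>) a" "y \<in> gen_subalg (*s) (\<cdot>) a" "z \<in> gen_subalg (*s) (\<cdot>) a"
  then have spans: "x \<in> span (range (rpow a))" "y \<in> span (range (rpow a))" "z \<in> span (range (rpow a))"
    using gen_subalg_subset_span_rpow by blast+
  show "lassoc (\<cdot>) x y z = 0"
    by (rule lassoc_eq_0_on_span[OF _ spans]) (auto simp: lassoc_rpow_eq_0)
qed

end

theorem theorem1:
  fixes scale :: "'k::field \<Rightarrow> 'v::ab_group_add \<Rightarrow> 'v"
    and mult :: "'v \<Rightarrow> 'v \<Rightarrow> 'v"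
  assumes "nonassoc_algebra scale mult"
    and "(2::'k) \<noteq> 0"
  shows "unary_leibniz scale mult \<longleftrightarrow>
         (\<forall>a. lassoc mult a a a = 0 \<and> lassoc mult (mult a a) a a = 0)"
proof
  assume "unary_leibniz scale mult"
  then show "\<forall>a. lassoc mult a a a = 0 \<and> lassoc mult (mult a a) a a = 0"
    unfolding unary_leibniz_def leibniz_on_def
    by (meson gen_subalg.gen gen_subalg.mul)
next
  assume identities: "\<forall>a. lassoc mult a a a = 0 \<and> lassoc mult (mult a a) a a = 0"
  interpret nonassoc_alg scale mult
    using assms(1) by (rule nonassoc_algebra_imp_nonassoc_alg)
  have cube: "mult (mult x x) x = 0" for x
    using identities by (simp add: lassoc_def)
  interpret unary_leibniz_identities scale mult
    by unfold_locales (use assms(2) cube identities in \<open>simp_all add: lassoc_def\<close>)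
  show "unary_leibniz scale mult"
    unfolding unary_leibniz_def by (simp add: leibniz_on_gen_subalg)
qed

end
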